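(* Let $x\in\mathbb{R}^{n}$ with $x\ge0$ entrywise, $x\ne0$, and $\mathbf{1}^{T}x\le\|x\|^{2}$. Then $\mathbf{1}^{T}\left(I-xx^{T}/\|x\|^{2}\right)\mathbf{1}\ge\|(\mathbf{1}-x)_{+}\|^{2}$.
   Context: $\mathbf{1}$ is the all-ones vector in $\mathbb{R}^{n}$ and $(v)_{+}=\max\{0,v\}$ entrywise. *)

theory Defs
  imports "HOL-Analysis.Analysis"
begin

end

theory Submission
  imports Defs
begin

text \<open>Write \<open>u = \<one>\<close> and \<open>t = (\<one>\<^sup>T x) / \<parallel>x\<parallel>\<^sup>2\<close>. The matrix is the orthogonal
  projection onto the complement of \<open>x\<close>, so the left-hand side equals \<open>\<parallel>u - t x\<parallel>\<^sup>2\<close>.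
  The hypotheses give \<open>0 \<le> t \<le> 1\<close>, and for \<open>x\<^sub>i \<ge> 0\<close> this yields
  \<open>\<bar>1 - t x\<^sub>i\<bar> \<ge> (1 - x\<^sub>i)\<^sub>+\<close> componentwise.\<close>

lemma outer_product_mult_vec:
  fixes x y v :: "'a::comm_semiring_1 ^ 'n"
  shows "(\<chi> i j. x $ i * y $ j) *v v = (\<Sum>j\<in>UNIV. y $ j * v $ j) *s x"
  by (simp add: vec_eq_iff matrix_vector_mult_def sum_distrib_left mult_ac)

lemma inner_minus_projection:
  fixes u x :: "'a::real_inner"
  assumes "x \<noteq> 0"
  shows "u \<bullet> (u - ((u \<bullet> x) / (norm x)\<^sup>2) *\<^sub>R x) = (norm (u - ((u \<bullet> x) / (norm x)\<^sup>2) *\<^sub>R x))\<^sup>2"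
proof -
  define p where "p = u - ((u \<bullet> x) / (norm x)\<^sup>2) *\<^sub>R x"
  have "p \<bullet> x = 0"
    using assms by (simp add: p_def inner_diff_left power2_norm_eq_inner)
  then have "u \<bullet> p = p \<bullet> p"
    by (simp add: p_def inner_diff_left inner_commute)
  then show ?thesis
    by (simp add: p_def power2_norm_eq_inner)
qed

lemma positive_part_sq_le:
  fixes a t :: real
  assumes "0 \<le> a" "0 \<le> t" "t \<le> 1"
  shows "(max 0 (1 - a))\<^sup>2 \<le> (1 - t * a)\<^sup>2"
proof (cases "a < 1")
  case True
  have "t * a \<le> a"
    using assms by (simp add: mult_left_le_one_le)
  with True show ?thesis
    by (intro power_mono) auto
qed simp

theorem lemma20:
  fixes x :: "real ^ 'n"
  assumes "\<forall>i. x $ i \<ge> 0"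
    and "x \<noteq> 0"
    and "(\<chi> i. 1) \<bullet> x \<le> (norm x)\<^sup>2"
  shows "(\<chi> i. 1) \<bullet> ((mat 1 - (1 / (norm x)\<^sup>2) *\<^sub>R (\<chi> i j. x $ i * x $ j)) *v (\<chi> i. 1))
           \<ge> (norm (\<chi> i. max 0 (1 - x $ i)))\<^sup>2"
proof -
  define u :: "real ^ 'n" where "u = (\<chi> i. 1)"
  define t where "t = (u \<bullet> x) / (norm x)\<^sup>2"
  have proj: "(mat 1 - (1 / (norm x)\<^sup>2) *\<^sub>R (\<chi> i j. x $ i * x $ j)) *v u = u - t *\<^sub>R x"
    by (simp add: matrix_vector_mult_diff_rdistrib flip: scaleR_matrix_vector_assoc)
       (simp add: outer_product_mult_vec t_def u_def inner_vec_def scalar_mult_eq_scaleR)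
  have "0 \<le> t" "t \<le> 1"
    using assms by (auto simp: t_def u_def inner_vec_def sum_nonneg)
  then have "norm (\<chi> i. max 0 (1 - x $ i)) \<le> norm (u - t *\<^sub>R x)"
    using assms(1) positive_part_sq_le
    by (intro norm_le_componentwise_cart) (simp add: u_def real_le_rsqrt flip: abs_le_square_iff)
  then show ?thesis
    using inner_minus_projection[OF assms(2), of u] proj
    by (simp add: t_def u_def power_mono)
qed

end
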